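(* For every $u\in W^{1,\gamma}(\Omega)$ there exists a unique $\kappa\in\mathbb{R}$ such that \[ \int_{\Gamma_D}(u+\kappa)_+^{\gamma-1}\,ds=\int_{\Gamma_N}j\,ds. \]
   Context: $\Omega\subset\mathbb{R}^d$ is open, bounded, connected, with $C^1$ boundary $\Gamma=\partial\Omega$; $ds$ denotes the surface measure $d\mathcal{H}^{d-1}$. $\Gamma=\overline{\Gamma_D\cup\Gamma_N}$, where $\Gamma_D,\Gamma_N$ are disjoint, nonempty, relatively open $C^1$ $(d-1)$-dimensional manifolds of positive $\mathcal{H}^{d-1}$-measure with $\mathcal{H}^{d-1}(\partial\Gamma_D\cap\partial\Gamma_N)=0$. The boundary values of $u$ are its trace. Exponents: $\alpha>1$, $\beta>0$, $\gamma=\frac{\beta+1}{\beta}\alpha$, $\gamma'=\gamma/(\gamma-1)$. $j\in L^{\gamma'}(\Gamma_N)$ with $j\ge0$, $j\not\equiv0$. $q_+=\max\{q,0\}$. *)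

theory Defs
  imports "HOL-Analysis.Analysis"
begin

text \<open>Normalising constant omega_m = pi^(m/2) / Gamma(m/2+1) (volume of the unit m-ball).\<close>
definition haus_const :: "nat \<Rightarrow> real" where
  "haus_const m = pi powr (real m / 2) / Gamma (real m / 2 + 1)"

text \<open>Contribution of one covering set; the empty set contributes 0
  (convention diam(empty)^0 = 0).\<close>
definition haus_piece :: "nat \<Rightarrow> 'a::metric_space set \<Rightarrow> ennreal" where
  "haus_piece m C = (if C = {} then 0 else ennreal (haus_const m * (diameter C / 2) ^ m))"

definition haus_delta :: "nat \<Rightarrow> real \<Rightarrow> 'a::metric_space set \<Rightarrow> ennreal" where
  "haus_delta m \<delta> A =
     (INF C \<in> {C :: nat \<Rightarrow> 'a set. A \<subseteq> (\<Union>n. C n) \<and> (\<forall>n. diameter (C n) \<le> \<delta>)}.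
        (\<Sum>n. haus_piece m (C n)))"

definition hausdorff_measure :: "nat \<Rightarrow> 'a::metric_space set \<Rightarrow> ennreal" where
  "hausdorff_measure m A = (SUP \<delta> \<in> {0<..}. haus_delta m \<delta> A)"

definition surface_measure :: "'a::euclidean_space measure" where
  "surface_measure = measure_of UNIV (sets borel) (hausdorff_measure (DIM('a) - 1))"

definition grad :: "('a::euclidean_space \<Rightarrow> real) \<Rightarrow> 'a \<Rightarrow> 'a" where
  "grad f x = (\<Sum>b\<in>Basis. frechet_derivative f (at x) b *\<^sub>R b)"

definition C1_fun :: "('a::euclidean_space \<Rightarrow> real) \<Rightarrow> bool" where
  "C1_fun f \<longleftrightarrow> (\<forall>x. f differentiable (at x)) \<and> continuous_on UNIV (grad f)"

text \<open>C^1 boundary: near each boundary point, after choosing a direction e, Omega is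
  the region below the graph of a C^1 function (constant along e).\<close>
definition C1_boundary :: "'a::euclidean_space set \<Rightarrow> bool" where
  "C1_boundary \<Omega> \<longleftrightarrow>
     (\<forall>x\<in>frontier \<Omega>. \<exists>e r h. norm e = 1 \<and> r > 0 \<and> C1_fun h \<and>
        (\<forall>y t. h (y + t *\<^sub>R e) = h y) \<and>
        \<Omega> \<inter> ball x r = {y \<in> ball x r. y \<bullet> e < h y})"

definition tsupp :: "('a::topological_space \<Rightarrow> real) \<Rightarrow> 'a set" where
  "tsupp \<phi> = closure {x. \<phi> x \<noteq> 0}"

definition Lp_fun :: "'a measure \<Rightarrow> real \<Rightarrow> ('a \<Rightarrow> real) \<Rightarrow> bool" where
  "Lp_fun M p f \<longleftrightarrow> f \<in> borel_measurable M \<and> integrable M (\<lambda>x. \<bar>f x\<bar> powr p)"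

definition Lp_vec :: "'a measure \<Rightarrow> real \<Rightarrow> ('a \<Rightarrow> 'b::euclidean_space) \<Rightarrow> bool" where
  "Lp_vec M p F \<longleftrightarrow> F \<in> borel_measurable M \<and> integrable M (\<lambda>x. norm (F x) powr p)"

definition weak_grad :: "'a::euclidean_space set \<Rightarrow> ('a \<Rightarrow> real) \<Rightarrow> ('a \<Rightarrow> 'a) \<Rightarrow> bool" where
  "weak_grad \<Omega> u G \<longleftrightarrow>
     (\<forall>\<phi>. C1_fun \<phi> \<and> compact (tsupp \<phi>) \<and> tsupp \<phi> \<subseteq> \<Omega> \<longrightarrow>
        (\<forall>b\<in>Basis. (LINT x:\<Omega>|lebesgue. u x * (grad \<phi> x \<bullet> b))
                    = - (LINT x:\<Omega>|lebesgue. (G x \<bullet> b) * \<phi> x)))"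

definition sobolev :: "'a::euclidean_space set \<Rightarrow> real \<Rightarrow> ('a \<Rightarrow> real) \<Rightarrow> ('a \<Rightarrow> 'a) \<Rightarrow> bool" where
  "sobolev \<Omega> p u G \<longleftrightarrow> Lp_fun (lebesgue_on \<Omega>) p u \<and> Lp_vec (lebesgue_on \<Omega>) p G \<and> weak_grad \<Omega> u G"

definition is_trace :: "'a::euclidean_space set \<Rightarrow> real \<Rightarrow> ('a \<Rightarrow> real) \<Rightarrow> ('a \<Rightarrow> 'a)
                         \<Rightarrow> ('a \<Rightarrow> real) \<Rightarrow> bool" where
  "is_trace \<Omega> p u G g \<longleftrightarrow> g \<in> borel_measurable borel \<and>
     (\<exists>v :: nat \<Rightarrow> 'a \<Rightarrow> real. (\<forall>n. C1_fun (v n)) \<and>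
        ((\<lambda>n. \<integral>\<^sup>+ x. ennreal (\<bar>v n x - u x\<bar> powr p + norm (grad (v n) x - G x) powr p)
                  \<partial>lebesgue_on \<Omega>) \<longlonglongrightarrow> 0) \<and>
        ((\<lambda>n. \<integral>\<^sup>+ x. ennreal (\<bar>v n x - g x\<bar> powr p)
                  \<partial>restrict_space surface_measure (frontier \<Omega>)) \<longlonglongrightarrow> 0))"

end

theory Submission
  imports Defs
begin

(* Locally the boundary is the graph of a C^1 function over a bounded piece of a hyperplane,
  i.e. a Lipschitz image of a (d-1)-dimensional box; covering the box by a fine grid bounds
  its H^(d-1) measure, and compactness leaves finitely many charts, so the boundary has finite
  surface measure. The trace g is an L^gamma(ds)-perturbation of a continuous function, hence
  lies in L^(gamma-1)(Gamma_D). Then F(kappa) = int_{Gamma_D} (g + kappa)_+^(gamma-1) ds is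
  finite, nondecreasing and continuous (dominated convergence), tends to 0 as kappa -> -infinity,
  exceeds every bound as kappa -> infinity, and is strictly increasing wherever it is positive.
  Since the Neumann integral of j is positive, F takes that value exactly once. *)

section \<open>Hausdorff measure of Lipschitz images of boxes\<close>

lemma haus_delta_le_cover:
  assumes "A \<subseteq> (\<Union>n. C n)" "\<And>n. diameter (C n) \<le> \<delta>"
  shows "haus_delta m \<delta> A \<le> (\<Sum>n. haus_piece m (C n))"
  unfolding haus_delta_def by (rule INF_lower) (use assms in auto)

lemma hausdorff_measure_leI:
  assumes "\<And>\<delta>. \<delta> > 0 \<Longrightarrow> haus_delta m \<delta> A \<le> K"
  shows "hausdorff_measure m A \<le> K"
  unfolding hausdorff_measure_def by (rule SUP_least) (use assms in auto)

lemma haus_delta_mono: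
  assumes "A \<subseteq> B"
  shows "haus_delta m \<delta> A \<le> haus_delta m \<delta> B"
  unfolding haus_delta_def by (rule INF_superset_mono) (use assms in auto)

lemma hausdorff_measure_mono:
  assumes "A \<subseteq> B"
  shows "hausdorff_measure m A \<le> hausdorff_measure m B"
  unfolding hausdorff_measure_def by (rule SUP_mono) (use haus_delta_mono[OF assms] in auto)

lemma haus_const_nonneg: "haus_const m \<ge> 0"
  unfolding haus_const_def by (intro divide_nonneg_pos) auto

lemma haus_piece_le:
  fixes C :: "'a::real_normed_vector set"
  assumes "d \<ge> 0" "\<And>x y. x \<in> C \<Longrightarrow> y \<in> C \<Longrightarrow> norm (x - y) \<le> d"
  shows "haus_piece m C \<le> ennreal (haus_const m * (d / 2) ^ m)"
proof (cases "C = {}")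
  case False
  have "bounded C"
    using assms(2) by (auto simp: bounded_two_points dist_norm)
  then have "0 \<le> diameter C" "diameter C \<le> d"
    using assms by (auto intro: diameter_ge_0 diameter_le)
  then show ?thesis
    using False haus_const_nonneg
    by (auto simp: haus_piece_def intro!: ennreal_leI mult_left_mono power_mono)
qed (simp add: haus_piece_def)

lemma haus_delta_le_finite_cover:
  fixes D :: "'i \<Rightarrow> 'a::real_normed_vector set"
  assumes "finite K" "A \<subseteq> (\<Union>k\<in>K. D k)" "0 \<le> d" "d \<le> \<delta>"
    and "\<And>k x y. k \<in> K \<Longrightarrow> x \<in> D k \<Longrightarrow> y \<in> D k \<Longrightarrow> norm (x - y) \<le> d"
  shows "haus_delta m \<delta> A \<le> of_nat (card K) * ennreal (haus_const m * (d / 2) ^ m)"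
proof -
  obtain f where f: "bij_betw f {0..<card K} K"
    using ex_bij_betw_nat_finite[OF assms(1)] by blast
  define C where "C n = (if n < card K then D (f n) else {})" for n
  have "A \<subseteq> (\<Union>n. C n)"
  proof
    fix x assume "x \<in> A"
    then obtain k where k: "k \<in> K" "x \<in> D k" using assms(2) by blast
    then obtain n where "n < card K" "f n = k" using f unfolding bij_betw_def by force
    then show "x \<in> (\<Union>n. C n)" using k unfolding C_def by auto
  qed
  moreover have "diameter (C n) \<le> \<delta>" for n
    using assms(3-5) bij_betwE[OF f] unfolding C_def by (force intro!: diameter_le)
  ultimately have "haus_delta m \<delta> A \<le> (\<Sum>n. haus_piece m (C n))"
    by (rule haus_delta_le_cover)
  also have "(\<Sum>n. haus_piece m (C n)) = (\<Sum>n<card K. haus_piece m (D (f n)))"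
    by (subst suminf_finite[of "{..<card K}"]) (auto simp: C_def haus_piece_def)
  also have "\<dots> \<le> (\<Sum>n<card K. ennreal (haus_const m * (d / 2) ^ m))"
    by (rule sum_mono, rule haus_piece_le) (use bij_betwE[OF f] assms(3,5) in force)+
  finally show ?thesis by simp
qed

definition hyperplane_box :: "'a::euclidean_space \<Rightarrow> real \<Rightarrow> 'a set" where
  "hyperplane_box b R = {w. w \<bullet> b = 0 \<and> (\<forall>b'\<in>Basis. \<bar>w \<bullet> b'\<bar> \<le> R)}"

definition grid_cell :: "'a::euclidean_space \<Rightarrow> real \<Rightarrow> ('a \<Rightarrow> int) \<Rightarrow> 'a set" where
  "grid_cell b s k = {w. w \<bullet> b = 0 \<and>
     (\<forall>b'\<in>Basis - {b}. of_int (k b') * s \<le> w \<bullet> b' \<and> w \<bullet> b' \<le> (of_int (k b') + 1) * s)}"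

lemma hyperplane_box_subset_grid_cells:
  assumes "s > 0" "N > 0"
  shows "hyperplane_box b (N * s) \<subseteq> (\<Union>k \<in> Basis - {b} \<rightarrow>\<^sub>E {- int N..<int N}. grid_cell b s k)"
proof
  fix w assume w: "w \<in> hyperplane_box b (N * s)"
  define k where "k = restrict (\<lambda>b'. min (int N - 1) \<lfloor>(w \<bullet> b') / s\<rfloor>) (Basis - {b})"
  have bounds: "- real N \<le> (w \<bullet> b') / s" "(w \<bullet> b') / s \<le> real N" if "b' \<in> Basis" for b'
    using w that assms(1) by (auto simp: hyperplane_box_def field_simps abs_le_iff)
  have "- int N \<le> \<lfloor>(w \<bullet> b') / s\<rfloor>" if "b' \<in> Basis" for b'
    using bounds(1)[OF that] by (simp add: le_floor_iff)
  then have "k \<in> Basis - {b} \<rightarrow>\<^sub>E {- int N..<int N}"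
    using assms(2) by (auto simp: k_def)
  moreover have "w \<in> grid_cell b s k"
  proof -
    have "of_int (k b') \<le> (w \<bullet> b') / s \<and> (w \<bullet> b') / s \<le> of_int (k b') + 1"
      if "b' \<in> Basis - {b}" for b'
      using that bounds[of b'] by (auto simp: k_def min_def) linarith+
    then show ?thesis
      using w assms(1) by (auto simp: grid_cell_def hyperplane_box_def field_simps)
  qed
  ultimately show "w \<in> (\<Union>k \<in> Basis - {b} \<rightarrow>\<^sub>E {- int N..<int N}. grid_cell b s k)"
    by blast
qed

lemma grid_cell_subset_hyperplane_box:
  assumes "s \<ge> 0" "k \<in> Basis - {b} \<rightarrow>\<^sub>E {- int N..<int N}"
  shows "grid_cell b s k \<subseteq> hyperplane_box b (N * s)"
proof
  fix w assume w: "w \<in> grid_cell b s k"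
  have "\<bar>w \<bullet> b'\<bar> \<le> N * s" if "b' \<in> Basis" for b'
  proof (cases "b' = b")
    case False
    then have "k b' \<in> {- int N..<int N}"
      using assms(2) that by (auto simp: PiE_iff)
    then have "- real N \<le> of_int (k b')" "of_int (k b') + 1 \<le> real N"
      by simp_all
    then have "- real N * s \<le> of_int (k b') * s" "(of_int (k b') + 1) * s \<le> real N * s"
      using assms(1) by (intro mult_right_mono; simp)+
    moreover have "of_int (k b') * s \<le> w \<bullet> b'" "w \<bullet> b' \<le> (of_int (k b') + 1) * s"
      using w that False by (auto simp: grid_cell_def)
    ultimately show ?thesis
      by (simp add: abs_le_iff)
  qed (use w assms(1) in \<open>auto simp: grid_cell_def\<close>)
  then show "w \<in> hyperplane_box b (N * s)"
    using w by (auto simp: hyperplane_box_def grid_cell_def)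
qed

lemma card_grid_indices:
  fixes b :: "'a::euclidean_space"
  assumes "b \<in> Basis"
  shows "card (Basis - {b} \<rightarrow>\<^sub>E {- int N..<int N}) = (2 * N) ^ (DIM('a) - 1)"
proof -
  have "nat (int N - - int N) = 2 * N" by simp
  then show ?thesis
    using assms by (simp add: card_PiE card_Diff_singleton del: diff_minus_eq_add)
qed

lemma grid_cell_norm_diff_le:
  fixes w w' :: "'a::euclidean_space" and s :: real
  assumes "w \<in> grid_cell b s k" "w' \<in> grid_cell b s k" "s \<ge> 0"
  shows "norm (w - w') \<le> DIM('a) * s"
proof -
  have "\<bar>(w - w') \<bullet> b'\<bar> \<le> s" if "b' \<in> Basis" for b'
  proof (cases "b' = b")
    case False
    then have "of_int (k b') * s \<le> w \<bullet> b'" "w \<bullet> b' \<le> (of_int (k b') + 1) * s"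
      "of_int (k b') * s \<le> w' \<bullet> b'" "w' \<bullet> b' \<le> (of_int (k b') + 1) * s"
      using assms that by (auto simp: grid_cell_def)
    then show ?thesis
      by (simp add: inner_diff_left algebra_simps abs_le_iff)
  qed (use assms in \<open>simp add: grid_cell_def inner_diff_left\<close>)
  then have "(\<Sum>b'\<in>Basis. \<bar>(w - w') \<bullet> b'\<bar>) \<le> DIM('a) * s"
    by (simp add: sum_bounded_above)
  then show ?thesis
    using norm_le_l1[of "w - w'"] by linarith
qed

lemma haus_delta_lipschitz_image_hyperplane_box_le:
  fixes F :: "'a::euclidean_space \<Rightarrow> 'b::real_normed_vector" and N :: nat and s L :: real
  assumes "L-lipschitz_on (hyperplane_box b (N * s)) F" "b \<in> Basis" "N > 0" "s > 0"
    and "L * DIM('a) * s \<le> \<delta>"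
  defines "m \<equiv> DIM('a) - 1"
  shows "haus_delta m \<delta> (F ` hyperplane_box b (N * s))
    \<le> ennreal (haus_const m * (L * DIM('a) * (N * s)) ^ m)"
proof -
  have L: "L \<ge> 0"
    using assms(1) by (rule lipschitz_on_nonneg)
  let ?K = "Basis - {b} \<rightarrow>\<^sub>E {- int N..<int N}"
  have diam: "norm (F w - F w') \<le> L * DIM('a) * s"
    if "k \<in> ?K" "w \<in> grid_cell b s k" "w' \<in> grid_cell b s k" for k w w'
  proof -
    have "norm (F w - F w') \<le> L * norm (w - w')"
      using lipschitz_onD[OF assms(1)] grid_cell_subset_hyperplane_box[of s k b N] assms(4) that
      by (auto simp: dist_norm)
    also have "\<dots> \<le> L * (DIM('a) * s)"
      using grid_cell_norm_diff_le[OF that(2,3)] assms(4) L by (simp add: mult_left_mono)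
    finally show ?thesis by simp
  qed
  have "haus_delta m \<delta> (F ` hyperplane_box b (N * s))
      \<le> of_nat (card ?K) * ennreal (haus_const m * (L * DIM('a) * s / 2) ^ m)"
  proof (rule haus_delta_le_finite_cover[where D = "\<lambda>k. F ` grid_cell b s k"])
    show "finite ?K"
      by (intro finite_PiE) auto
    show "F ` hyperplane_box b (N * s) \<subseteq> (\<Union>k\<in>?K. F ` grid_cell b s k)"
      using hyperplane_box_subset_grid_cells[OF assms(4,3), of b] by blast
    show "0 \<le> L * DIM('a) * s"
      using L assms(4) by simp
  qed (use diam assms(5) in auto)
  also have "card ?K = (2 * N) ^ m"
    unfolding m_def using assms(2) by (rule card_grid_indices)
  also have "of_nat ((2 * N) ^ m) * ennreal (haus_const m * (L * DIM('a) * s / 2) ^ m)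
      = ennreal (haus_const m * (real (2 * N) * (L * DIM('a) * s / 2)) ^ m)"
  proof -
    have "real ((2 * N) ^ m) * (haus_const m * (L * DIM('a) * s / 2) ^ m)
        = haus_const m * (real (2 * N) * (L * DIM('a) * s / 2)) ^ m"
      by (simp only: of_nat_power power_mult_distrib[of "real (2 * N)"] mult.left_commute)
    moreover have "haus_const m * (L * DIM('a) * s / 2) ^ m \<ge> 0"
      using haus_const_nonneg L assms(4) by simp
    ultimately show ?thesis
      by (metis ennreal_mult ennreal_of_nat_eq_real_of_nat of_nat_0_le_iff)
  qed
  also have "real (2 * N) * (L * DIM('a) * s / 2) = L * DIM('a) * (N * s)"
    by (simp add: algebra_simps)
  finally show ?thesis .
qed

lemma hausdorff_measure_lipschitz_image_hyperplane_box_le: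
  fixes F :: "'a::euclidean_space \<Rightarrow> 'b::real_normed_vector"
  assumes "L-lipschitz_on (hyperplane_box b R) F" "b \<in> Basis" "R > 0"
  defines "m \<equiv> DIM('a) - 1"
  shows "hausdorff_measure m (F ` hyperplane_box b R) \<le> ennreal (haus_const m * (L * DIM('a) * R) ^ m)"
proof (rule hausdorff_measure_leI)
  fix \<delta> :: real assume "\<delta> > 0"
  obtain n :: nat where n: "L * DIM('a) * R / \<delta> \<le> n"
    using real_arch_simple by blast
  define s where "s = R / Suc n"
  have s: "s > 0" "Suc n * s = R"
    using assms(3) by (auto simp: s_def)
  have "L * DIM('a) * R \<le> n * \<delta>"
    using n \<open>\<delta> > 0\<close> by (simp add: pos_divide_le_eq)
  also have "\<dots> \<le> Suc n * \<delta>"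
    using \<open>\<delta> > 0\<close> by simp
  finally have "L * DIM('a) * s \<le> \<delta>"
    by (simp add: s_def field_simps)
  then have "haus_delta m \<delta> (F ` hyperplane_box b (Suc n * s))
      \<le> ennreal (haus_const m * (L * DIM('a) * (Suc n * s)) ^ m)"
    unfolding m_def by (intro haus_delta_lipschitz_image_hyperplane_box_le) (use assms s in auto)
  then show "haus_delta m \<delta> (F ` hyperplane_box b R) \<le> ennreal (haus_const m * (L * DIM('a) * R) ^ m)"
    by (simp only: s(2))
qed

section \<open>Graphs of \<open>C\<^sup>1\<close> functions\<close>

lemma frechet_derivative_eq_grad_inner:
  fixes h :: "'a::euclidean_space \<Rightarrow> real"
  assumes "h differentiable (at z)"
  shows "frechet_derivative h (at z) v = grad h z \<bullet> v"
proof -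
  have lin: "linear (frechet_derivative h (at z))"
    using assms frechet_derivative_works has_derivative_linear by blast
  have "frechet_derivative h (at z) v = frechet_derivative h (at z) (\<Sum>b\<in>Basis. (v \<bullet> b) *\<^sub>R b)"
    by (simp add: euclidean_representation)
  also have "\<dots> = (\<Sum>b\<in>Basis. (v \<bullet> b) * frechet_derivative h (at z) b)"
    using lin by (simp add: linear_sum linear_scale)
  also have "\<dots> = grad h z \<bullet> v"
    unfolding grad_def by (simp add: inner_sum_right inner_commute mult.commute)
  finally show ?thesis .
qed

lemma C1_fun_continuous: "C1_fun h \<Longrightarrow> continuous_on UNIV h"
  unfolding C1_fun_def
  by (meson differentiable_at_imp_differentiable_on differentiable_imp_continuous_on)

lemma C1_fun_lipschitz_on:
  fixes h :: "'a::euclidean_space \<Rightarrow> real"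
  assumes "C1_fun h" "convex U" "compact U"
  obtains B where "B-lipschitz_on U h"
proof -
  have diff: "\<And>x. h differentiable (at x)" and cont: "continuous_on UNIV (grad h)"
    using assms(1) unfolding C1_fun_def by auto
  have "compact (grad h ` U)"
    using compact_continuous_image[OF continuous_on_subset[OF cont] assms(3)] by auto
  then obtain B0 where B0: "\<And>z. z \<in> U \<Longrightarrow> norm (grad h z) \<le> B0"
    using compact_imp_bounded bounded_iff by (metis image_eqI)
  define B where "B = max B0 0"
  have "norm (h z - h z') \<le> B * norm (z - z')" if "z \<in> U" "z' \<in> U" for z z'
  proof (rule differentiable_bound[OF assms(2) _ _ that])
    show "(h has_derivative frechet_derivative h (at x)) (at x within U)" for x
      using diff frechet_derivative_works has_derivative_at_withinI by blast
    show "onorm (frechet_derivative h (at x)) \<le> B" if "x \<in> U" for x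
    proof (rule onorm_le)
      fix v
      have "norm (frechet_derivative h (at x) v) = \<bar>grad h x \<bullet> v\<bar>"
        using frechet_derivative_eq_grad_inner[OF diff] by simp
      also have "\<dots> \<le> norm (grad h x) * norm v" by (rule Cauchy_Schwarz_ineq2)
      also have "\<dots> \<le> B * norm v"
        using B0[OF that] by (intro mult_right_mono) (auto simp: B_def)
      finally show "norm (frechet_derivative h (at x) v) \<le> B * norm v" .
    qed
  qed
  then have "B-lipschitz_on U h"
    by (intro lipschitz_onI) (auto simp: B_def dist_norm)
  then show ?thesis by (rule that)
qed

text \<open>For \<open>h\<close> constant along the unit vector \<open>e\<close>, \<open>graph_lift e h w\<close> is the point of the graph
  \<open>y \<bullet> e = h y\<close> on the line through \<open>w\<close> parallel to \<open>e\<close>.\<close>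
definition graph_lift :: "'a::real_inner \<Rightarrow> ('a \<Rightarrow> real) \<Rightarrow> 'a \<Rightarrow> 'a" where
  "graph_lift e h w = w + (h w - w \<bullet> e) *\<^sub>R e"

lemma lipschitz_on_graph_lift:
  fixes e :: "'a::real_inner"
  assumes "B-lipschitz_on U h" "norm e = 1"
  shows "(2 + B)-lipschitz_on U (graph_lift e h)"
proof (rule lipschitz_onI)
  fix w w' assume "w \<in> U" "w' \<in> U"
  have "norm (graph_lift e h w - graph_lift e h w')
      = norm ((w - w') + ((h w - h w') - (w - w') \<bullet> e) *\<^sub>R e)"
    by (simp add: graph_lift_def algebra_simps inner_diff_left)
  also have "\<dots> \<le> norm (w - w') + norm (((h w - h w') - (w - w') \<bullet> e) *\<^sub>R e)"
    by (rule norm_triangle_ineq)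
  also have "\<dots> \<le> norm (w - w') + (\<bar>h w - h w'\<bar> + \<bar>(w - w') \<bullet> e\<bar>)"
    using assms(2) abs_triangle_ineq4[of "h w - h w'" "(w - w') \<bullet> e"] by simp
  also have "\<dots> \<le> norm (w - w') + (B * norm (w - w') + norm (w - w'))"
    using lipschitz_onD[OF assms(1) \<open>w \<in> U\<close> \<open>w' \<in> U\<close>] Cauchy_Schwarz_ineq2[of "w - w'" e] assms(2)
    by (simp add: dist_norm)
  finally show "dist (graph_lift e h w) (graph_lift e h w') \<le> (2 + B) * dist w w'"
    by (simp add: dist_norm algebra_simps)
qed (use lipschitz_on_nonneg[OF assms(1)] in simp)

lemma graph_subset_graph_lift_image:
  fixes e x :: "'a::euclidean_space"
  assumes e: "norm e = 1" and h_const: "\<And>y t. h (y + t *\<^sub>R e) = h y"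
    and b: "b \<in> Basis" "e \<bullet> b \<noteq> 0" and R: "(norm x + \<bar>r\<bar>) * (1 + 1 / \<bar>e \<bullet> b\<bar>) \<le> R"
  shows "{y \<in> cball x r. y \<bullet> e = h y} \<subseteq> graph_lift e h ` hyperplane_box b R"
proof
  fix y assume "y \<in> {y \<in> cball x r. y \<bullet> e = h y}"
  then have y: "norm y \<le> norm x + \<bar>r\<bar>" "y \<bullet> e = h y"
    using norm_triangle_ineq2[of y x] by (auto simp: dist_norm norm_minus_commute)
  define t where "t = (y \<bullet> b) / (e \<bullet> b)"
  define w where "w = y - t *\<^sub>R e"
  have "\<bar>t\<bar> \<le> norm y / \<bar>e \<bullet> b\<bar>"
    unfolding t_def abs_divide using Basis_le_norm[OF b(1), of y] b(2)
    by (simp add: divide_right_mono)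
  then have "norm w \<le> norm y * (1 + 1 / \<bar>e \<bullet> b\<bar>)"
    using norm_triangle_ineq4[of y "t *\<^sub>R e"] e by (simp add: w_def algebra_simps)
  also have "\<dots> \<le> R"
    using mult_right_mono[OF y(1), of "1 + 1 / \<bar>e \<bullet> b\<bar>"] R by simp
  finally have "norm w \<le> R" .
  moreover have "w \<bullet> b = 0"
    using b(2) by (simp add: w_def t_def inner_diff_left)
  ultimately have "w \<in> hyperplane_box b R"
    by (auto simp: hyperplane_box_def intro: order_trans[OF Basis_le_norm])
  moreover have "graph_lift e h w = y"
  proof -
    have "h w = h y" unfolding w_def using h_const[of y "- t"] by simp
    moreover have "w \<bullet> e = y \<bullet> e - t"
      using e by (simp add: w_def inner_diff_left dot_square_norm)
    ultimately show ?thesis using y(2) by (simp add: graph_lift_def w_def algebra_simps)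
  qed
  ultimately show "y \<in> graph_lift e h ` hyperplane_box b R" by blast
qed

lemma hyperplane_box_subset_cball: "hyperplane_box b R \<subseteq> cball 0 (DIM('a) * R)"
  for b :: "'a::euclidean_space" and R :: real
proof
  fix w :: 'a assume "w \<in> hyperplane_box b R"
  then have "(\<Sum>b'\<in>Basis. \<bar>w \<bullet> b'\<bar>) \<le> DIM('a) * R"
    by (intro order_trans[OF sum_bounded_above[of _ _ R]]) (auto simp: hyperplane_box_def)
  then show "w \<in> cball 0 (DIM('a) * R)"
    using norm_le_l1[of w] by simp
qed

lemma hausdorff_measure_C1_graph_finite:
  fixes e x :: "'a::euclidean_space" and h :: "'a \<Rightarrow> real"
  assumes e: "norm e = 1" and h: "C1_fun h" and h_const: "\<And>y t. h (y + t *\<^sub>R e) = h y"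
  shows "hausdorff_measure (DIM('a) - 1) {y \<in> cball x r. y \<bullet> e = h y} < \<infinity>"
proof -
  obtain b where b: "b \<in> Basis" "e \<bullet> b \<noteq> 0"
    using e euclidean_all_zero_iff[of e] by force
  define R where "R = (norm x + \<bar>r\<bar>) * (1 + 1 / \<bar>e \<bullet> b\<bar>) + 1"
  have R: "R > 0"
    unfolding R_def by (intro add_nonneg_pos mult_nonneg_nonneg) auto
  obtain B where "B-lipschitz_on (cball 0 (DIM('a) * R)) h"
    using C1_fun_lipschitz_on[OF h convex_cball compact_cball] .
  then have lip: "(2 + B)-lipschitz_on (hyperplane_box b R) (graph_lift e h)"
    using lipschitz_on_graph_lift[OF lipschitz_on_subset[OF _ hyperplane_box_subset_cball] e] by blast
  have "hausdorff_measure (DIM('a) - 1) {y \<in> cball x r. y \<bullet> e = h y}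
      \<le> hausdorff_measure (DIM('a) - 1) (graph_lift e h ` hyperplane_box b R)"
    using graph_subset_graph_lift_image[OF e h_const b] by (intro hausdorff_measure_mono) (simp add: R_def)
  also have "\<dots> < \<infinity>"
    using hausdorff_measure_lipschitz_image_hyperplane_box_le[OF lip b(1) R] by (simp add: order_le_less_trans)
  finally show ?thesis .
qed

lemma frontier_inter_ball_subset_graph:
  fixes \<Omega> :: "'a::euclidean_space set"
  assumes "open \<Omega>" "C1_fun h" "\<Omega> \<inter> ball z r = {y \<in> ball z r. y \<bullet> e < h y}"
  shows "frontier \<Omega> \<inter> ball z r \<subseteq> {y \<in> cball z r. y \<bullet> e = h y}"
proof
  fix y assume y: "y \<in> frontier \<Omega> \<inter> ball z r"
  then have yc: "y \<in> closure \<Omega>" and yn: "y \<notin> \<Omega>" and yb: "y \<in> ball z r"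
    using assms(1) by (auto simp: frontier_def interior_open)
  have "\<not> h y < y \<bullet> e"
  proof
    assume "h y < y \<bullet> e"
    define V where "V = ball z r \<inter> {p. h p < p \<bullet> e}"
    have "open {p. h p < p \<bullet> e}"
      by (rule open_Collect_less) (use C1_fun_continuous[OF assms(2)] in \<open>auto intro: continuous_intros\<close>)
    then have "open V" unfolding V_def by auto
    moreover have "y \<in> V \<inter> closure \<Omega>" using \<open>h y < y \<bullet> e\<close> yb yc by (auto simp: V_def)
    ultimately obtain p where "p \<in> V" "p \<in> \<Omega>"
      using open_Int_closure_eq_empty[of V \<Omega>] by auto
    then have "p \<in> \<Omega> \<inter> ball z r" "h p < p \<bullet> e"
      by (auto simp: V_def)
    then show False using assms(3) by auto
  qed
  moreover have "\<not> y \<bullet> e < h y" using yn yb assms(3) by blast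
  ultimately show "y \<in> {y \<in> cball z r. y \<bullet> e = h y}" using yb by auto
qed

section \<open>Surface measure of a \<open>C\<^sup>1\<close> boundary\<close>

lemma sets_surface_measure:
  "sets (surface_measure :: 'a::euclidean_space measure) = sets borel"
  unfolding surface_measure_def
  using sets.sigma_sets_eq[of "borel :: 'a measure"] by (simp add: sets_measure_of_conv)

text \<open>\<open>measure_of\<close> yields the null measure unless its argument is a measure, so any set of
  positive surface measure certifies that \<open>H\<^sup>d\<^sup>-\<^sup>1\<close> is countably additive on Borel sets.\<close>
lemma measure_space_hausdorff_measureI:
  assumes "emeasure (surface_measure :: 'a::euclidean_space measure) A \<noteq> 0"
  shows "measure_space UNIV (sets borel) (hausdorff_measure (DIM('a) - 1) :: 'a set \<Rightarrow> ennreal)"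
proof (rule ccontr)
  assume "\<not> ?thesis"
  then have "emeasure (surface_measure :: 'a measure) A = 0"
    unfolding surface_measure_def
    using sets.sigma_sets_eq[of "borel :: 'a measure"] by (simp add: emeasure_measure_of_conv)
  with assms show False ..
qed

lemma emeasure_surface_measure:
  assumes "measure_space UNIV (sets borel) (hausdorff_measure (DIM('a) - 1) :: 'a set \<Rightarrow> ennreal)"
    and "A \<in> sets borel"
  shows "emeasure (surface_measure :: 'a::euclidean_space measure) A = hausdorff_measure (DIM('a) - 1) A"
  unfolding surface_measure_def
  by (rule emeasure_measure_of_sigma) (use assms in \<open>auto simp: measure_space_def\<close>)

lemma emeasure_surface_measure_frontier_finite:
  fixes \<Omega> :: "'a::euclidean_space set"
  assumes "open \<Omega>" "bounded \<Omega>" "C1_boundary \<Omega>"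
    and H: "measure_space UNIV (sets borel) (hausdorff_measure (DIM('a) - 1) :: 'a set \<Rightarrow> ennreal)"
  shows "emeasure (surface_measure :: 'a measure) (frontier \<Omega>) < \<infinity>"
proof -
  let ?M = "surface_measure :: 'a measure"
  have "\<exists>r>0. emeasure ?M (frontier \<Omega> \<inter> ball z r) < \<infinity>" if z: "z \<in> frontier \<Omega>" for z
  proof -
    obtain e r h where chart: "norm e = 1" "r > 0" "C1_fun h" "\<forall>y t. h (y + t *\<^sub>R e) = h y"
      "\<Omega> \<inter> ball z r = {y \<in> ball z r. y \<bullet> e < h y}"
      using assms(3) z unfolding C1_boundary_def by blast
    have "emeasure ?M (frontier \<Omega> \<inter> ball z r) = hausdorff_measure (DIM('a) - 1) (frontier \<Omega> \<inter> ball z r)"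
      using H by (rule emeasure_surface_measure) auto
    also have "\<dots> \<le> hausdorff_measure (DIM('a) - 1) {y \<in> cball z r. y \<bullet> e = h y}"
      by (rule hausdorff_measure_mono[OF frontier_inter_ball_subset_graph[OF assms(1) chart(3,5)]])
    also have "\<dots> < \<infinity>"
      using chart by (intro hausdorff_measure_C1_graph_finite) auto
    finally show ?thesis using chart(2) by blast
  qed
  then obtain \<rho> where \<rho>: "\<And>z. z \<in> frontier \<Omega> \<Longrightarrow> \<rho> z > 0 \<and> emeasure ?M (frontier \<Omega> \<inter> ball z (\<rho> z)) < \<infinity>"
    by metis
  obtain C where C: "C \<subseteq> frontier \<Omega>" "finite C" "frontier \<Omega> \<subseteq> (\<Union>z\<in>C. ball z (\<rho> z))"
    using compact_frontier_bounded[OF assms(2)]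
    by (rule compactE_image[where f = "\<lambda>z. ball z (\<rho> z)"]) (use \<rho> in auto)
  have "emeasure ?M (frontier \<Omega>) = emeasure ?M (\<Union>z\<in>C. frontier \<Omega> \<inter> ball z (\<rho> z))"
    using C(3) by (intro arg_cong[where f = "emeasure ?M"]) blast
  also have "\<dots> \<le> (\<Sum>z\<in>C. emeasure ?M (frontier \<Omega> \<inter> ball z (\<rho> z)))"
    using C(2) by (intro emeasure_subadditive_finite) (auto simp: sets_surface_measure)
  also have "\<dots> < \<infinity>"
    using C \<rho> by (simp add: less_top[symmetric] subset_iff)
  finally show ?thesis .
qed

lemma openin_frontier_sets_surface_measure:
  fixes \<Omega> :: "'a::euclidean_space set"
  assumes "openin (top_of_set (frontier \<Omega>)) A"
  shows "A \<in> sets surface_measure"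
proof -
  obtain T where "open T" "A = frontier \<Omega> \<inter> T"
    using assms unfolding openin_open by blast
  then show ?thesis
    unfolding sets_surface_measure by (auto intro: sets.Int borel_closed borel_open)
qed

lemma emeasure_surface_measure_openin_frontier_finite:
  fixes \<Omega> :: "'a::euclidean_space set"
  assumes "openin (top_of_set (frontier \<Omega>)) A" "emeasure surface_measure (frontier \<Omega>) < \<infinity>"
  shows "emeasure surface_measure A < \<infinity>"
proof -
  have "emeasure surface_measure A \<le> emeasure surface_measure (frontier \<Omega>)"
    by (rule emeasure_mono[OF openin_imp_subset[OF assms(1)]]) (simp add: sets_surface_measure)
  then show ?thesis
    using assms(2) by (rule le_less_trans)
qed

lemma powr_le_two_powr_sum:
  fixes a s t p :: real
  assumes "0 \<le> a" "0 \<le> s" "0 \<le> t" "a \<le> s + t" "0 \<le> p"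
  shows "a powr p \<le> 2 powr p * (s powr p + t powr p)"
proof -
  have "a powr p \<le> (2 * max s t) powr p"
    using assms by (intro powr_mono2) auto
  also have "\<dots> = 2 powr p * max s t powr p"
    using assms by (simp add: powr_mult)
  also have "max s t powr p \<le> s powr p + t powr p"
    by (cases "s \<le> t") (auto simp: max_def)
  finally show ?thesis by (simp add: mult_left_mono)
qed

lemma powr_le_one_add_powr:
  fixes a p q :: real
  assumes "0 \<le> a" "0 \<le> p" "p \<le> q"
  shows "a powr p \<le> 1 + a powr q"
proof (cases "a \<le> 1")
  case True
  then have "a powr p \<le> 1"
    using assms by (intro powr_le1) auto
  then show ?thesis by (simp add: add_increasing2)
next
  case False
  then have "a powr p \<le> a powr q"
    using assms by (intro powr_mono) auto
  then show ?thesis by simp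
qed

lemma set_integrable_const_finite:
  assumes "A \<in> sets M" "emeasure M A < \<infinity>"
  shows "set_integrable M A (\<lambda>_. c :: real)"
  unfolding set_integrable_def using assms
  by (intro integrable_scaleR_left) (simp add: integrable_indicator_iff Int_absorb2 sets.sets_into_space)

lemma set_integrable_powr_le_exponent:
  fixes f :: "'a \<Rightarrow> real"
  assumes "A \<in> sets M" "emeasure M A < \<infinity>" "f \<in> borel_measurable M" "0 \<le> p" "p \<le> q"
    and "set_integrable M A (\<lambda>x. \<bar>f x\<bar> powr q)"
  shows "set_integrable M A (\<lambda>x. \<bar>f x\<bar> powr p)"
proof (rule set_integrable_bound)
  show "set_integrable M A (\<lambda>x. 1 + \<bar>f x\<bar> powr q)"
    using assms by (intro set_integral_add set_integrable_const_finite)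
  show "set_borel_measurable M A (\<lambda>x. \<bar>f x\<bar> powr p)"
    using assms unfolding set_borel_measurable_def by measurable
  show "AE x in M. x \<in> A \<longrightarrow> norm (\<bar>f x\<bar> powr p) \<le> norm (1 + \<bar>f x\<bar> powr q)"
    using powr_le_one_add_powr[OF abs_ge_zero assms(4,5)] by simp
qed

lemma set_integrable_if_powr:
  fixes f :: "'a \<Rightarrow> real"
  assumes "A \<in> sets M" "emeasure M A < \<infinity>" "f \<in> borel_measurable M" "1 \<le> q"
    and "set_integrable M A (\<lambda>x. \<bar>f x\<bar> powr q)"
  shows "set_integrable M A f"
proof -
  have "set_integrable M A (\<lambda>x. \<bar>f x\<bar> powr 1)"
    by (rule set_integrable_powr_le_exponent[where q = q]) (use assms in auto)
  then show ?thesis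
    using set_integrable_abs_iff'[OF assms(3,1)] by simp
qed

lemma set_integrable_powr_near_bounded:
  fixes f v :: "'a \<Rightarrow> real"
  assumes A: "A \<in> sets M" "emeasure M A < \<infinity>"
    and [measurable]: "f \<in> borel_measurable M" "v \<in> borel_measurable M"
    and v_bounded: "\<And>x. x \<in> A \<Longrightarrow> \<bar>v x\<bar> \<le> B"
    and close: "(\<integral>\<^sup>+x. ennreal (\<bar>v x - f x\<bar> powr p) \<partial>restrict_space M A) < \<infinity>"
    and p: "0 \<le> p"
  shows "set_integrable M A (\<lambda>x. \<bar>f x\<bar> powr p)"
proof (rule set_integrable_bound)
  have "integrable (restrict_space M A) (\<lambda>x. \<bar>v x - f x\<bar> powr p)"
    using A close by (intro integrableI_nonneg) (auto simp: measurable_restrict_space1)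
  then have "set_integrable M A (\<lambda>x. \<bar>v x - f x\<bar> powr p)"
    using A by (simp add: set_integrable_eq sets.Int_space_eq2)
  then show "set_integrable M A (\<lambda>x. 2 powr p * (B powr p + \<bar>v x - f x\<bar> powr p))"
    using A by (intro set_integrable_mult_right set_integral_add set_integrable_const_finite)
  show "set_borel_measurable M A (\<lambda>x. \<bar>f x\<bar> powr p)"
    using A(1) unfolding set_borel_measurable_def by measurable
  have "\<bar>f x\<bar> powr p \<le> 2 powr p * (B powr p + \<bar>v x - f x\<bar> powr p)" if "x \<in> A" for x
    using v_bounded[OF that] p by (intro powr_le_two_powr_sum) auto
  then show "AE x in M. x \<in> A \<longrightarrow> norm (\<bar>f x\<bar> powr p) \<le> norm (2 powr p * (B powr p + \<bar>v x - f x\<bar> powr p))"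
    by (auto intro!: AE_I2 order_trans[OF _ abs_ge_self])
qed

lemma set_integral_pos:
  fixes f :: "'a \<Rightarrow> real"
  assumes "set_integrable M A f" "AE x in M. x \<in> A \<longrightarrow> 0 \<le> f x"
    and "\<not> (AE x in M. x \<in> A \<longrightarrow> f x = 0)"
  shows "(LINT x:A|M. f x) > 0"
proof -
  have int: "integrable M (\<lambda>x. indicator A x * f x)"
    using assms(1) by (simp add: set_integrable_def)
  have nonneg: "AE x in M. 0 \<le> indicator A x * f x"
    using assms(2) by eventually_elim (simp add: indicator_def)
  have "\<not> (AE x in M. indicator A x * f x = 0)"
    using assms(3) by (simp add: indicator_def)
  then have "(LINT x:A|M. f x) \<noteq> 0"
    using integral_nonneg_eq_0_iff_AE[OF int nonneg] by (simp add: set_lebesgue_integral_def)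
  moreover have "(LINT x:A|M. f x) \<ge> 0"
    using integral_nonneg_AE[OF nonneg] by (simp add: set_lebesgue_integral_def)
  ultimately show ?thesis by simp
qed

lemma measurable_superlevel_set:
  fixes g :: "'a \<Rightarrow> real"
  assumes "D \<in> sets M" "g \<in> borel_measurable M"
  shows "{x \<in> D. a \<le> g x} \<in> sets M"
proof -
  have "{x \<in> D. a \<le> g x} = {x \<in> space M. x \<in> D \<and> a \<le> g x}"
    using sets.sets_into_space[OF assms(1)] by blast
  then show ?thesis
    using assms by simp
qed

lemma superlevel_set_measure_pos:
  fixes g :: "'a \<Rightarrow> real"
  assumes "D \<in> sets M" "emeasure M D < \<infinity>" "emeasure M D \<noteq> 0" "g \<in> borel_measurable M"
  obtains n :: nat where "measure M {x \<in> D. - real n \<le> g x} > 0"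
proof -
  define E where "E n = {x \<in> D. - real n \<le> g x}" for n :: nat
  have E: "E n \<in> sets M" "emeasure M (E n) < \<infinity>" for n
    using measurable_superlevel_set[OF assms(1,4)] assms(2) emeasure_mono[of "E n" D M] assms(1)
    by (auto simp: E_def intro: le_less_trans)
  have "D \<subseteq> (\<Union>n. E n)"
  proof
    fix x assume "x \<in> D"
    moreover obtain n :: nat where "- g x \<le> n"
      using real_arch_simple by blast
    ultimately have "x \<in> E n"
      by (simp add: E_def)
    then show "x \<in> (\<Union>n. E n)" by blast
  qed
  then obtain n where "E n \<notin> null_sets M"
    using assms(1,3) null_sets_UN[of E M] null_sets_subset[of "\<Union>n. E n" M D] by auto
  then have "measure M (E n) > 0"
    using E[of n] by (simp add: emeasure_eq_ennreal_measure null_sets_def zero_less_measure_iff)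
  then show ?thesis
    using that by (simp add: E_def)
qed

section \<open>Integrability of the trace\<close>

lemma borel_measurable_surface_measure_iff:
  "f \<in> borel_measurable (surface_measure :: 'a::euclidean_space measure) \<longleftrightarrow> f \<in> borel_measurable borel"
  by (simp only: measurable_cong_sets[OF sets_surface_measure refl])

lemma set_integrable_trace_powr:
  fixes \<Omega> :: "'a::euclidean_space set"
  assumes trace: "is_trace \<Omega> p u G g" and "bounded \<Omega>"
    and "emeasure surface_measure (frontier \<Omega>) < \<infinity>" "0 \<le> p"
  shows "set_integrable surface_measure (frontier \<Omega>) (\<lambda>x. \<bar>g x\<bar> powr p)"
proof -
  obtain v where v: "\<And>n. C1_fun (v n)"
    and lim: "(\<lambda>n. \<integral>\<^sup>+ x. ennreal (\<bar>v n x - g x\<bar> powr p) \<partial>restrict_space surface_measure (frontier \<Omega>))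
               \<longlonglongrightarrow> 0"
    and g: "g \<in> borel_measurable borel"
    using trace unfolding is_trace_def by blast
  obtain n where n: "(\<integral>\<^sup>+ x. ennreal (\<bar>v n x - g x\<bar> powr p) \<partial>restrict_space surface_measure (frontier \<Omega>)) < 1"
    using order_tendstoD(2)[OF lim, of 1] by (auto simp: eventually_sequentially)
  have cont: "continuous_on UNIV (v n)"
    using v by (rule C1_fun_continuous)
  have "compact (v n ` frontier \<Omega>)"
    using continuous_on_subset[OF cont subset_UNIV] compact_frontier_bounded[OF \<open>bounded \<Omega>\<close>]
    by (rule compact_continuous_image)
  then obtain B where B: "\<And>x. x \<in> frontier \<Omega> \<Longrightarrow> \<bar>v n x\<bar> \<le> B"
    using compact_imp_bounded bounded_real by (metis image_eqI)
  show ?thesis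
  proof (rule set_integrable_powr_near_bounded[where v = "v n", OF _ _ _ _ B])
    show "g \<in> borel_measurable surface_measure" "v n \<in> borel_measurable surface_measure"
      using g borel_measurable_continuous_onI[OF cont]
      by (simp_all add: borel_measurable_surface_measure_iff)
    show "(\<integral>\<^sup>+ x. ennreal (\<bar>v n x - g x\<bar> powr p) \<partial>restrict_space surface_measure (frontier \<Omega>)) < \<infinity>"
      using n by (simp add: order_less_trans)
  qed (use assms in \<open>auto simp: sets_surface_measure\<close>)
qed

lemma set_integrable_trace_powr_openin:
  fixes \<Omega> :: "'a::euclidean_space set"
  assumes "is_trace \<Omega> p u G g" "bounded \<Omega>" "emeasure surface_measure (frontier \<Omega>) < \<infinity>"
    and A: "openin (top_of_set (frontier \<Omega>)) A" and "0 \<le> q" "q \<le> p"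
  shows "set_integrable surface_measure A (\<lambda>x. \<bar>g x\<bar> powr q)"
proof (rule set_integrable_powr_le_exponent)
  show "A \<in> sets surface_measure"
    using A by (rule openin_frontier_sets_surface_measure)
  show "emeasure surface_measure A < \<infinity>"
    using A assms(3) by (rule emeasure_surface_measure_openin_frontier_finite)
  show "g \<in> borel_measurable surface_measure"
    using assms(1) by (simp add: is_trace_def borel_measurable_surface_measure_iff)
  show "set_integrable surface_measure A (\<lambda>x. \<bar>g x\<bar> powr p)"
    using set_integrable_trace_powr[OF assms(1-3)] assms(5,6) \<open>A \<in> sets surface_measure\<close>
      openin_imp_subset[OF A]
    by (simp add: set_integrable_subset)
qed (use assms in auto)

section \<open>Shifted positive parts\<close>

locale positive_part_shift =
  fixes M :: "'a measure" and D :: "'a set" and g :: "'a \<Rightarrow> real" and p :: real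
  assumes D_sets [measurable]: "D \<in> sets M" and D_finite: "emeasure M D < \<infinity>"
    and g_measurable [measurable]: "g \<in> borel_measurable M"
    and g_integrable: "set_integrable M D (\<lambda>x. \<bar>g x\<bar> powr p)"
    and p_pos: "0 < p"
begin

definition shift_integral :: "real \<Rightarrow> real" where
  "shift_integral \<kappa> = (LINT x:D|M. max (g x + \<kappa>) 0 powr p)"

lemma shift_powr_le:
  assumes "\<kappa> \<le> K" "0 \<le> K"
  shows "max (g x + \<kappa>) 0 powr p \<le> 2 powr p * (\<bar>g x\<bar> powr p + K powr p)"
  using assms p_pos by (intro powr_le_two_powr_sum) auto

lemma set_integrable_shift_bound: "set_integrable M D (\<lambda>x. 2 powr p * (\<bar>g x\<bar> powr p + K powr p))"
  using g_integrable D_finite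
  by (intro set_integrable_mult_right set_integral_add set_integrable_const_finite) auto

lemma set_integrable_shift: "set_integrable M D (\<lambda>x. max (g x + \<kappa>) 0 powr p)"
proof (rule set_integrable_bound[OF set_integrable_shift_bound[of "\<bar>\<kappa>\<bar>"]])
  show "set_borel_measurable M D (\<lambda>x. max (g x + \<kappa>) 0 powr p)"
    unfolding set_borel_measurable_def by measurable
  show "AE x in M. x \<in> D \<longrightarrow> norm (max (g x + \<kappa>) 0 powr p) \<le> norm (2 powr p * (\<bar>g x\<bar> powr p + \<bar>\<kappa>\<bar> powr p))"
    using shift_powr_le[of \<kappa> "\<bar>\<kappa>\<bar>"] by (intro AE_I2) simp
qed

lemma shift_integral_mono: "\<kappa>1 \<le> \<kappa>2 \<Longrightarrow> shift_integral \<kappa>1 \<le> shift_integral \<kappa>2"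
  unfolding shift_integral_def using p_pos
  by (intro set_integral_mono set_integrable_shift powr_mono2) auto

text \<open>Only an upper bound on the shifts is assumed, so that shifts tending to \<open>-\<infinity>\<close> are
  covered too: the integrand is monotone in the shift.\<close>
lemma shift_integral_dominated_convergence:
  assumes bound: "\<And>n. \<kappa>s n \<le> K"
    and lim: "\<And>x. x \<in> D \<Longrightarrow> (\<lambda>n. max (g x + \<kappa>s n) 0 powr p) \<longlonglongrightarrow> f x"
    and [measurable]: "f \<in> borel_measurable M"
  shows "(\<lambda>n. shift_integral (\<kappa>s n)) \<longlonglongrightarrow> (LINT x:D|M. f x)"
  unfolding shift_integral_def set_lebesgue_integral_def
proof (rule integral_dominated_convergence)
  let ?K = "max K 0"
  show "integrable M (\<lambda>x. indicator D x *\<^sub>R (2 powr p * (\<bar>g x\<bar> powr p + ?K powr p)))"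
    using set_integrable_shift_bound unfolding set_integrable_def .
  show "AE x in M. norm (indicator D x *\<^sub>R max (g x + \<kappa>s n) 0 powr p)
      \<le> indicator D x *\<^sub>R (2 powr p * (\<bar>g x\<bar> powr p + ?K powr p))" for n
    using shift_powr_le[of "\<kappa>s n" ?K] bound[of n] by (intro AE_I2) (auto simp: indicator_def)
  show "AE x in M. (\<lambda>n. indicator D x *\<^sub>R max (g x + \<kappa>s n) 0 powr p) \<longlonglongrightarrow> indicator D x *\<^sub>R f x"
    using lim by (intro AE_I2) (auto simp: indicator_def)
qed measurable

lemma continuous_on_shift_integral: "continuous_on UNIV shift_integral"
proof (rule continuous_on_sequentiallyI)
  fix \<kappa>s :: "nat \<Rightarrow> real" and \<kappa> assume lim: "\<kappa>s \<longlonglongrightarrow> \<kappa>"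
  then obtain K where "\<And>n. norm (\<kappa>s n) \<le> K"
    using convergent_imp_Bseq[OF convergentI[OF lim]] BseqE by metis
  then have "\<And>n. \<kappa>s n \<le> K" by (auto dest: abs_le_D1)
  then have "(\<lambda>n. shift_integral (\<kappa>s n)) \<longlonglongrightarrow> (LINT x:D|M. max (g x + \<kappa>) 0 powr p)"
  proof (rule shift_integral_dominated_convergence)
    show "(\<lambda>n. max (g x + \<kappa>s n) 0 powr p) \<longlonglongrightarrow> max (g x + \<kappa>) 0 powr p" for x
      using p_pos by (intro tendsto_powr' tendsto_max tendsto_add tendsto_const lim) auto
  qed measurable
  then show "(\<lambda>n. shift_integral (\<kappa>s n)) \<longlonglongrightarrow> shift_integral \<kappa>"
    by (simp add: shift_integral_def)
qed

lemma shift_integral_tendsto_zero: "(\<lambda>n. shift_integral (- real n)) \<longlonglongrightarrow> 0"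
proof -
  have "(\<lambda>n. max (g x - real n) 0 powr p) \<longlonglongrightarrow> 0" for x
  proof (rule tendsto_eventually)
    obtain N :: nat where "g x < N"
      using reals_Archimedean2 by blast
    then show "\<forall>\<^sub>F n in sequentially. max (g x - real n) 0 powr p = 0"
      unfolding eventually_sequentially by (intro exI[of _ N]) auto
  qed
  then have "(\<lambda>n. shift_integral (- real n)) \<longlonglongrightarrow> (LINT x:D|M. 0)"
    by (intro shift_integral_dominated_convergence[where K = 0]) auto
  then show ?thesis by simp
qed

lemma shift_integral_unbounded:
  assumes "emeasure M D \<noteq> 0"
  shows "\<exists>\<kappa>. c < shift_integral \<kappa>"
proof -
  obtain n :: nat where m: "measure M {x \<in> D. - real n \<le> g x} > 0"
    using D_sets D_finite assms g_measurable by (rule superlevel_set_measure_pos)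
  define E where "E = {x \<in> D. - real n \<le> g x}"
  have E: "E \<in> sets M" "emeasure M E < \<infinity>"
    using measurable_superlevel_set[OF D_sets g_measurable] D_finite
      emeasure_mono[of E D M] by (auto simp: E_def intro: le_less_trans)
  define t where "t = (\<bar>c\<bar> / measure M E + 1) powr (1 / p)"
  have t: "t \<ge> 0" "t powr p = \<bar>c\<bar> / measure M E + 1"
    using m p_pos by (auto simp: t_def E_def powr_powr add_pos_nonneg)
  have "measure M E * t powr p = (LINT x:D|M. indicator E x * t powr p)"
  proof -
    have "(\<lambda>x. indicator D x *\<^sub>R (indicator E x * t powr p)) = (\<lambda>x. indicator E x * t powr p)"
      by (intro ext) (auto simp: E_def split: split_indicator)
    then have "(LINT x:D|M. indicator E x * t powr p) = (LINT x|M. indicator E x * t powr p)"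
      by (simp only: set_lebesgue_integral_def)
    also have "\<dots> = measure M E * t powr p"
      using E by simp
    finally show ?thesis by (rule sym)
  qed
  also have "\<dots> \<le> shift_integral (n + t)"
    unfolding shift_integral_def
  proof (rule set_integral_mono)
    show "set_integrable M D (\<lambda>x. indicator E x * t powr p)"
      using set_integrable_const_finite[OF D_sets D_finite, of "t powr p"]
      by (rule set_integrable_bound) (use E in \<open>auto simp: set_borel_measurable_def indicator_def\<close>)
    show "indicator E x * t powr p \<le> max (g x + (n + t)) 0 powr p" for x
      using t(1) p_pos by (auto simp: E_def indicator_def intro!: powr_mono2)
  qed (rule set_integrable_shift)
  finally have "measure M E * t powr p \<le> shift_integral (n + t)" .
  moreover have "measure M E * t powr p = \<bar>c\<bar> + measure M E"
    using m t(2) by (simp add: E_def field_simps)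
  ultimately show ?thesis
    using m abs_ge_self[of c] unfolding E_def by (intro exI[of _ "n + t"]) linarith
qed

lemma shift_integral_strict_mono:
  assumes "\<kappa>1 < \<kappa>2" "shift_integral \<kappa>1 \<noteq> 0"
  shows "shift_integral \<kappa>1 < shift_integral \<kappa>2"
proof (rule ccontr)
  let ?\<phi> = "\<lambda>\<kappa> x. max (g x + \<kappa>) 0 powr p"
  assume "\<not> ?thesis"
  then have "(LINT x:D|M. ?\<phi> \<kappa>2 x - ?\<phi> \<kappa>1 x) = 0"
    using shift_integral_mono[of \<kappa>1 \<kappa>2] assms(1)
    by (simp add: set_integral_diff(2)[OF set_integrable_shift set_integrable_shift] shift_integral_def)
  moreover have "integrable M (\<lambda>x. indicator D x * (?\<phi> \<kappa>2 x - ?\<phi> \<kappa>1 x))"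
    using set_integral_diff(1)[OF set_integrable_shift set_integrable_shift]
    by (simp add: set_integrable_def)
  moreover have "AE x in M. 0 \<le> indicator D x * (?\<phi> \<kappa>2 x - ?\<phi> \<kappa>1 x)"
    using assms(1) p_pos by (intro AE_I2) (auto simp: indicator_def intro!: powr_mono2)
  ultimately have "AE x in M. indicator D x * (?\<phi> \<kappa>2 x - ?\<phi> \<kappa>1 x) = 0"
    by (simp add: integral_nonneg_eq_0_iff_AE set_lebesgue_integral_def)
  then have "AE x in M. x \<in> D \<longrightarrow> ?\<phi> \<kappa>1 x = 0"
  proof eventually_elim
    case (elim x)
    show ?case
    proof
      assume "x \<in> D"
      then have "?\<phi> \<kappa>1 x = ?\<phi> \<kappa>2 x"
        using elim by simp
      then show "?\<phi> \<kappa>1 x = 0"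
        using assms(1) p_pos powr_less_mono2[of p "g x + \<kappa>1" "g x + \<kappa>2"]
        by (cases "g x + \<kappa>1 > 0") auto
    qed
  qed
  then have "shift_integral \<kappa>1 = (LINT x:D|M. 0)"
    unfolding shift_integral_def by (intro set_lebesgue_integral_cong_AE) auto
  with assms(2) show False by simp
qed

lemma ex1_shift_integral_eq:
  assumes "emeasure M D \<noteq> 0" "c > 0"
  shows "\<exists>!\<kappa>. shift_integral \<kappa> = c"
proof -
  obtain a where a: "shift_integral a < c"
    using order_tendstoD(2)[OF shift_integral_tendsto_zero assms(2)]
    by (auto simp: eventually_sequentially)
  obtain b where b: "c < shift_integral b"
    using shift_integral_unbounded[OF assms(1)] by blast
  have "a \<le> b"
    using shift_integral_mono[of b a] a b by fastforce
  then obtain \<kappa> where "shift_integral \<kappa> = c"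
    using IVT'[of shift_integral a c b] a b continuous_on_subset[OF continuous_on_shift_integral]
    by fastforce
  moreover have "\<kappa>' = \<kappa>" if "shift_integral \<kappa>' = c" "shift_integral \<kappa> = c" for \<kappa>' \<kappa>
    using shift_integral_strict_mono[of \<kappa>' \<kappa>] shift_integral_strict_mono[of \<kappa> \<kappa>'] that assms(2)
    by (cases \<kappa>' \<kappa> rule: linorder_cases) auto
  ultimately show ?thesis by blast
qed

end

theorem lemma5p5:
  fixes \<Omega> \<Gamma>D \<Gamma>N :: "'a::euclidean_space set"
    and \<alpha> \<beta> :: real
    and j u g :: "'a \<Rightarrow> real"
    and G :: "'a \<Rightarrow> 'a"
  defines "\<gamma> \<equiv> (\<beta> + 1) / \<beta> * \<alpha>"
  defines "\<gamma>' \<equiv> \<gamma> / (\<gamma> - 1)"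
  assumes \<Omega>: "open \<Omega>" "bounded \<Omega>" "connected \<Omega>" "C1_boundary \<Omega>"
    and \<Gamma>D: "openin (top_of_set (frontier \<Omega>)) \<Gamma>D" "\<Gamma>D \<noteq> {}"
          "emeasure surface_measure \<Gamma>D > 0"
    and \<Gamma>N: "openin (top_of_set (frontier \<Omega>)) \<Gamma>N" "\<Gamma>N \<noteq> {}"
          "emeasure surface_measure \<Gamma>N > 0"
    and disj: "\<Gamma>D \<inter> \<Gamma>N = {}"
    and cover: "frontier \<Omega> = closure (\<Gamma>D \<union> \<Gamma>N)"
    and interface: "emeasure surface_measure ((closure \<Gamma>D - \<Gamma>D) \<inter> (closure \<Gamma>N - \<Gamma>N)) = 0"
    and exps: "\<alpha> > 1" "\<beta> > 0"
    and j: "j \<in> borel_measurable surface_measure"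
           "set_integrable surface_measure \<Gamma>N (\<lambda>x. \<bar>j x\<bar> powr \<gamma>')"
           "AE x in surface_measure. x \<in> \<Gamma>N \<longrightarrow> j x \<ge> 0"
           "\<not> (AE x in surface_measure. x \<in> \<Gamma>N \<longrightarrow> j x = 0)"
    and u: "sobolev \<Omega> \<gamma> u G"
    and trace: "is_trace \<Omega> \<gamma> u G g"
  shows "\<exists>!\<kappa>::real. (LINT x:\<Gamma>D|surface_measure. (max (g x + \<kappa>) 0) powr (\<gamma> - 1))
                    = (LINT x:\<Gamma>N|surface_measure. j x)"
proof -
  have "\<gamma> > 1"
    using exps mult_strict_left_mono[of 1 \<alpha> "\<beta> + 1"] by (simp add: \<gamma>_def field_simps)
  then have "\<gamma>' \<ge> 1"
    by (simp add: \<gamma>'_def)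
  have fin: "emeasure surface_measure (frontier \<Omega>) < \<infinity>"
    using emeasure_surface_measure_frontier_finite[OF \<Omega>(1,2,4) measure_space_hausdorff_measureI[of \<Gamma>D]] \<Gamma>D(3)
    by simp
  note \<Gamma>_sets = openin_frontier_sets_surface_measure[OF \<Gamma>D(1)] openin_frontier_sets_surface_measure[OF \<Gamma>N(1)]
  note \<Gamma>_finite = emeasure_surface_measure_openin_frontier_finite[OF \<Gamma>D(1) fin]
    emeasure_surface_measure_openin_frontier_finite[OF \<Gamma>N(1) fin]
  interpret positive_part_shift surface_measure \<Gamma>D g "\<gamma> - 1"
  proof
    show "g \<in> borel_measurable surface_measure"
      using trace by (simp add: is_trace_def borel_measurable_surface_measure_iff)
    show "set_integrable surface_measure \<Gamma>D (\<lambda>x. \<bar>g x\<bar> powr (\<gamma> - 1))"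
      by (rule set_integrable_trace_powr_openin[OF trace \<Omega>(2) fin \<Gamma>D(1)]) (use \<open>\<gamma> > 1\<close> in auto)
  qed (use \<Gamma>_sets \<Gamma>_finite \<open>\<gamma> > 1\<close> in auto)
  have "set_integrable surface_measure \<Gamma>N j"
    using \<Gamma>_sets(2) \<Gamma>_finite(2) j(1) \<open>\<gamma>' \<ge> 1\<close> j(2) by (rule set_integrable_if_powr)
  then have "(LINT x:\<Gamma>N|surface_measure. j x) > 0"
    using j(3,4) by (rule set_integral_pos)
  then show ?thesis
    using ex1_shift_integral_eq \<Gamma>D(3) by (simp add: shift_integral_def)
qed

end
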